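(* Let $\mathbf{F}$ be a field of characteristic $2$, $m\ge1$, and let $A,B\in\{0,1\}^m$ with $|A|\ge2$ and $|B|\ge2$. Put $I=A\cap B$, $J=A\setminus B$, $K=B\setminus A$. Then $$\mathrm{Tr}(A)\mathrm{Tr}(B)+\sum_{L<I}x^{I-L}N^L\,\mathrm{Tr}(I-L+J+K)+N^I\sum_{L<J}x^{J-L}\,\mathrm{Tr}(L+K)\in\ker(\pi).$$
   Context: Let $S=\mathbf{F}[x_1,y_1,\dots,x_m,y_m]$ with the $\mathbf{F}$-algebra automorphism $\sigma(x_i)=x_i$, $\sigma(y_i)=y_i+x_i$ of order 2, and let $S^{C_2}$ be the ring of $\sigma$-invariants. For $A=(a_1,\dots,a_m)\in\mathbb{N}^m$ write $x^A=\prod_s x_s^{a_s}$, $y^A=\prod_s y_s^{a_s}$, $N^A=\prod_s N_s^{a_s}$, and $|A|=\sum_s a_s$. $A\le B$ means componentwise $\le$; $L<A$ means $L\le A$, $L\ne A$; sums and differences of sequences are componentwise. Elements of $\{0,1\}^m$ are identified with subsets of $\{1,\dots,m\}$ (via characteristic vectors), and $\cap$, $\setminus$ are the corresponding set operations. $\Delta_s$ is the sequence with $1$ in position $s$ and $0$ elsewhere. For $A\in\{0,1\}^m$, $\mathrm{tr}(A)=y^A+\prod_s(y_s+x_s)^{a_s}\in S^{C_2}$. Let $R=\mathbf{F}[x_1,\dots,x_m,N_1,\dots,N_m]$ be a polynomial ring in $2m$ indeterminates and $Q=R[\mathrm{Tr}(A): A\in\{0,1\}^m,|A|\ge2]$ a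 polynomial ring over $R$. Let $\pi:Q\to S^{C_2}$ be the $\mathbf{F}$-algebra homomorphism with $\pi(x_i)=x_i$, $\pi(N_i)=y_i^2+x_iy_i$, $\pi(\mathrm{Tr}(A))=\mathrm{tr}(A)$. Convention: for $C\in\{0,1\}^m$ with $|C|\le1$, $\mathrm{Tr}(0)=0$ and $\mathrm{Tr}(\Delta_s)=x_s$ in $Q$ (so $\pi(\mathrm{Tr}(C))=\mathrm{tr}(C)$ for all $C$). *)

theory Defs
  imports "HOL-Library.Poly_Mapping"
begin

text \<open>Multivariate polynomials over a coefficient ring 'a in variables of type 'v,
  represented as finitely supported maps from monomials (exponent vectors) to coefficients.\<close>
type_synonym ('v, 'a) mpoly = "('v \<Rightarrow>\<^sub>0 nat) \<Rightarrow>\<^sub>0 'a"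

definition mvar :: "'v \<Rightarrow> ('v, 'a::comm_semiring_1) mpoly" where
  "mvar v = Poly_Mapping.single (Poly_Mapping.single v 1) 1"

definition mconst :: "'a \<Rightarrow> ('v, 'a::comm_semiring_1) mpoly" where
  "mconst c = Poly_Mapping.single 0 c"

definition meval :: "('v \<Rightarrow> 'b::comm_semiring_1) \<Rightarrow> ('a \<Rightarrow> 'b) \<Rightarrow> ('v, 'a::comm_semiring_1) mpoly \<Rightarrow> 'b" where
  "meval img cf p = (\<Sum>mon\<in>Poly_Mapping.keys p. cf (Poly_Mapping.lookup p mon) * (\<Prod>v\<in>Poly_Mapping.keys mon. img v ^ Poly_Mapping.lookup mon v))"

text \<open>Variables of S = F[x_1,y_1,...,x_m,y_m].\<close>
datatype svar = SX nat | SY nat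

type_synonym 'a spoly = "(svar, 'a) mpoly"

text \<open>Variables of Q = F[x_i, N_i][Tr(A)]; Tr(A) is indexed by the subset A of {1..m}.\<close>
datatype qvar = QX nat | QN nat | QT "nat set"

type_synonym 'a qpoly = "(qvar, 'a) mpoly"

definition sx :: "nat \<Rightarrow> 'a::comm_semiring_1 spoly" where "sx i = mvar (SX i)"
definition sy :: "nat \<Rightarrow> 'a::comm_semiring_1 spoly" where "sy i = mvar (SY i)"

definition tr :: "nat set \<Rightarrow> 'a::comm_semiring_1 spoly" where
  "tr A = (\<Prod>s\<in>A. sy s) + (\<Prod>s\<in>A. sy s + sx s)"

definition qx :: "nat \<Rightarrow> 'a::comm_semiring_1 qpoly" where "qx i = mvar (QX i)"
definition qN :: "nat \<Rightarrow> 'a::comm_semiring_1 qpoly" where "qN i = mvar (QN i)"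

text \<open>Tr(C) in Q, with the convention Tr(0) = 0 and Tr(Delta_s) = x_s.\<close>
definition Tr :: "nat set \<Rightarrow> 'a::comm_semiring_1 qpoly" where
  "Tr C = (if card C = 0 then 0
           else if card C = 1 then qx (the_elem C)
           else mvar (QT C))"

fun pi_var :: "qvar \<Rightarrow> 'a::comm_semiring_1 spoly" where
  "pi_var (QX i) = sx i"
| "pi_var (QN i) = sy i ^ 2 + sx i * sy i"
| "pi_var (QT A) = tr A"

definition pi :: "'a::comm_semiring_1 qpoly \<Rightarrow> 'a spoly" where
  "pi p = meval pi_var mconst p"

definition xpow :: "nat set \<Rightarrow> 'a::comm_semiring_1 qpoly" where
  "xpow A = (\<Prod>s\<in>A. qx s)"
definition Npow :: "nat set \<Rightarrow> 'a::comm_semiring_1 qpoly" where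
  "Npow A = (\<Prod>s\<in>A. qN s)"

end

theory Submission
  imports Defs
begin

text \<open>Write \<open>z_s = y_s + x_s\<close>, so that \<open>tr(C) = y^C + z^C\<close>, \<open>N_s = y_s z_s\<close> and, in
  characteristic 2, \<open>x_s = y_s + z_s\<close>; hence \<open>x_s y_s + N_s = y_s^2\<close> and \<open>x_s z_s + N_s = z_s^2\<close>.
  Expanding these products over subsets of \<open>I\<close> (and of \<open>J\<close>) yields the product formula
  \<open>tr(A) tr(B) = \<Sum>_{L \<subseteq> I} x^{I-L} N^L tr(I-L+J+K) + N^I \<Sum>_{L \<subseteq> J} x^{J-L} tr(L+K)\<close>
  in characteristic 2. The summands \<open>L = I\<close> and \<open>L = J\<close> left out in the theorem both equal
  \<open>N^I tr(J+K)\<close>, so the element in question maps to \<open>2 (tr(A) tr(B) - N^I tr(J+K)) = 0\<close>.\<close>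

lemma poly_mapping_sum_single_keys:
  "p = (\<Sum>k\<in>Poly_Mapping.keys p. Poly_Mapping.single k (Poly_Mapping.lookup p k))"
  by (rule poly_mapping_eqI) (simp add: lookup_sum lookup_single when_def in_keys_iff)

definition monom_eval :: "('v \<Rightarrow> 'b::comm_semiring_1) \<Rightarrow> ('v \<Rightarrow>\<^sub>0 nat) \<Rightarrow> 'b" where
  "monom_eval img k = (\<Prod>v\<in>Poly_Mapping.keys k. img v ^ Poly_Mapping.lookup k v)"

lemma monom_eval_superset:
  assumes "finite S" "Poly_Mapping.keys k \<subseteq> S"
  shows "monom_eval img k = (\<Prod>v\<in>S. img v ^ Poly_Mapping.lookup k v)"
  unfolding monom_eval_def
  by (rule prod.mono_neutral_left) (use assms in \<open>auto simp: in_keys_iff\<close>)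

lemma monom_eval_add: "monom_eval img (k + l) = monom_eval img k * monom_eval img l"
proof -
  let ?S = "Poly_Mapping.keys k \<union> Poly_Mapping.keys l"
  have "monom_eval img (k + l) = (\<Prod>v\<in>?S. img v ^ Poly_Mapping.lookup (k + l) v)"
    by (rule monom_eval_superset) (auto simp: keys_add)
  also have "\<dots> = (\<Prod>v\<in>?S. img v ^ Poly_Mapping.lookup k v * img v ^ Poly_Mapping.lookup l v)"
    by (simp add: lookup_add power_add)
  also have "\<dots> = monom_eval img k * monom_eval img l"
    by (simp add: prod.distrib monom_eval_superset[of ?S])
  finally show ?thesis .
qed

lemma meval_mconst:
  "meval img mconst p =
   (\<Sum>k\<in>Poly_Mapping.keys p. mconst (Poly_Mapping.lookup p k) * monom_eval img k)"
  by (simp add: meval_def monom_eval_def)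

lemma mconst_add: "mconst (a + b) = mconst a + mconst b"
  by (simp add: mconst_def single_add)

lemma mconst_mult: "mconst (a * b) = (mconst a * mconst b :: ('v, 'a::comm_semiring_1) mpoly)"
  by (simp add: mconst_def mult_single)

lemma mconst_0 [simp]: "mconst 0 = 0"
  by (simp add: mconst_def)

lemma mconst_1 [simp]: "mconst 1 = 1"
  by (simp add: mconst_def)

lemma meval_single:
  "meval img mconst (Poly_Mapping.single k c) = mconst c * monom_eval img k"
  by (cases "c = 0") (simp_all add: meval_mconst)

lemma meval_zero [simp]: "meval img mconst 0 = 0"
  by (simp add: meval_def)

lemma meval_one [simp]: "meval img mconst (1 :: ('v, 'a::comm_semiring_1) mpoly) = 1"
  using meval_single[of img 0 1] by (simp add: monom_eval_def)

lemma meval_add: "meval img mconst (p + q) = meval img mconst p + meval img mconst q"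
  unfolding meval_mconst
  by (rule setsum_keys_plus_distrib) (simp_all add: mconst_add distrib_right)

lemma meval_sum: "meval img mconst (\<Sum>i\<in>S. f i) = (\<Sum>i\<in>S. meval img mconst (f i))"
  by (induction S rule: infinite_finite_induct) (simp_all add: meval_add)

lemma meval_mult: "meval img mconst (p * q) = meval img mconst p * meval img mconst q"
proof -
  let ?P = "Poly_Mapping.keys p" and ?Q = "Poly_Mapping.keys q"
  have "p * q = (\<Sum>k\<in>?P. Poly_Mapping.single k (Poly_Mapping.lookup p k)) *
                (\<Sum>l\<in>?Q. Poly_Mapping.single l (Poly_Mapping.lookup q l))"
    by (metis poly_mapping_sum_single_keys)
  also have "\<dots> = (\<Sum>k\<in>?P. \<Sum>l\<in>?Q.
      Poly_Mapping.single (k + l) (Poly_Mapping.lookup p k * Poly_Mapping.lookup q l))"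
    by (simp add: sum_distrib_left sum_distrib_right mult_single sum.swap[of _ ?Q])
  finally have "meval img mconst (p * q) = (\<Sum>k\<in>?P. \<Sum>l\<in>?Q.
      (mconst (Poly_Mapping.lookup p k) * monom_eval img k) *
      (mconst (Poly_Mapping.lookup q l) * monom_eval img l))"
    by (simp add: meval_sum meval_single mconst_mult monom_eval_add algebra_simps)
  also have "\<dots> = meval img mconst p * meval img mconst q"
    by (simp add: meval_mconst sum_distrib_left sum_distrib_right sum.swap[of _ ?Q])
  finally show ?thesis .
qed

lemma meval_prod: "meval img mconst (\<Prod>i\<in>S. f i) = (\<Prod>i\<in>S. meval img mconst (f i))"
  by (induction S rule: infinite_finite_induct) (simp_all add: meval_mult)

lemma meval_mvar: "meval img mconst (mvar v) = img v"
  by (simp add: mvar_def meval_single monom_eval_def)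

lemma sum_Pow_diff:
  assumes "finite I"
  shows "(\<Sum>L\<in>Pow I. f (I - L)) = (\<Sum>L\<in>Pow I. f L)"
  by (rule sum.reindex_bij_witness[where i = "\<lambda>L. I - L" and j = "\<lambda>L. I - L"]) auto

lemma sum_psubset_eq:
  fixes f :: "'a set \<Rightarrow> 'r::ab_group_add"
  assumes "finite I"
  shows "(\<Sum>L | L \<subset> I. f L) = (\<Sum>L\<in>Pow I. f L) - f I"
proof -
  have "Pow I = insert I {L. L \<subset> I}" by auto
  moreover have "finite {L. L \<subset> I}"
    by (rule finite_subset[of _ "Pow I"]) (auto simp: assms)
  ultimately show ?thesis by simp
qed

lemma sum_Pow_prod_mult_prod_add:
  fixes u v y z :: "'b \<Rightarrow> 'r::comm_semiring_1"
  assumes fin: "finite I" "finite D" and disj: "I \<inter> D = {}"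
  shows "(\<Sum>L\<in>Pow I. prod u L * prod v (I - L) * (prod y (L \<union> D) + prod z (L \<union> D))) =
    prod y D * (\<Prod>s\<in>I. u s * y s + v s) + prod z D * (\<Prod>s\<in>I. u s * z s + v s)"
proof -
  have "prod w (L \<union> D) = prod w L * prod w D" if "L \<in> Pow I" for L and w :: "'b \<Rightarrow> 'r"
    using that fin disj by (intro prod.union_disjoint) (auto dest: finite_subset)
  then have "(\<Sum>L\<in>Pow I. prod u L * prod v (I - L) * (prod y (L \<union> D) + prod z (L \<union> D))) =
      prod y D * (\<Sum>L\<in>Pow I. prod (\<lambda>s. u s * y s) L * prod v (I - L)) +
      prod z D * (\<Sum>L\<in>Pow I. prod (\<lambda>s. u s * z s) L * prod v (I - L))"
    by (simp add: prod.distrib sum_distrib_left sum.distrib algebra_simps)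
  then show ?thesis
    using fin by (simp add: prod_add)
qed

context
  fixes x y z N :: "'b \<Rightarrow> 'r::comm_ring_1" and t :: "'b set \<Rightarrow> 'r"
  assumes two: "(2::'r) = 0"
    and x_eq: "\<And>s. x s = y s + z s"
    and N_eq: "\<And>s. N s = y s * z s"
    and t_eq: "\<And>C. t C = prod y C + prod z C"
begin

lemma sum_Pow_x_N_trace:
  assumes fin: "finite I" "finite D" and disj: "I \<inter> D = {}"
  shows "(\<Sum>L\<in>Pow I. prod x (I - L) * prod N L * t ((I - L) \<union> D)) =
    prod y D * prod y I ^ 2 + prod z D * prod z I ^ 2"
proof -
  have xy: "x s * y s + N s = y s ^ 2" for s
  proof -
    have "x s * y s + N s = y s ^ 2 + 2 * (y s * z s)"
      by (simp add: x_eq N_eq power2_eq_square algebra_simps)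
    then show ?thesis using two by simp
  qed
  have xz: "x s * z s + N s = z s ^ 2" for s
  proof -
    have "x s * z s + N s = z s ^ 2 + 2 * (y s * z s)"
      by (simp add: x_eq N_eq power2_eq_square algebra_simps)
    then show ?thesis using two by simp
  qed
  have "(\<Sum>L\<in>Pow I. prod x (I - L) * prod N L * t ((I - L) \<union> D)) =
      (\<Sum>L\<in>Pow I. prod x (I - L) * prod N (I - (I - L)) * t ((I - L) \<union> D))"
    by (intro sum.cong) (auto simp: Diff_Diff_Int Int_absorb1)
  also have "\<dots> = (\<Sum>L\<in>Pow I. prod x L * prod N (I - L) * t (L \<union> D))"
    using fin(1) by (rule sum_Pow_diff)
  also have "\<dots> = prod y D * (\<Prod>s\<in>I. x s * y s + N s) + prod z D * (\<Prod>s\<in>I. x s * z s + N s)"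
    unfolding t_eq by (rule sum_Pow_prod_mult_prod_add[OF fin disj])
  also have "\<dots> = prod y D * prod y I ^ 2 + prod z D * prod z I ^ 2"
    by (simp add: xy xz prod_power_distrib)
  finally show ?thesis .
qed

lemma sum_Pow_x_trace:
  assumes fin: "finite J" "finite D" and disj: "J \<inter> D = {}"
  shows "(\<Sum>L\<in>Pow J. prod x (J - L) * t (L \<union> D)) = prod y D * prod z J + prod z D * prod y J"
proof -
  have yx: "y s + x s = z s" and zx: "z s + x s = y s" for s
  proof -
    have "y s + x s = z s + 2 * y s" "z s + x s = y s + 2 * z s"
      by (simp_all add: x_eq algebra_simps)
    then show "y s + x s = z s" "z s + x s = y s" using two by simp_all
  qed
  have "(\<Sum>L\<in>Pow J. prod x (J - L) * t (L \<union> D)) =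
      (\<Sum>L\<in>Pow J. prod (\<lambda>_. 1) L * prod x (J - L) * t (L \<union> D))"
    by simp
  also have "\<dots> = prod y D * (\<Prod>s\<in>J. 1 * y s + x s) + prod z D * (\<Prod>s\<in>J. 1 * z s + x s)"
    unfolding t_eq by (rule sum_Pow_prod_mult_prod_add[OF fin disj])
  also have "\<dots> = prod y D * prod z J + prod z D * prod y J"
    by (simp add: yx zx)
  finally show ?thesis .
qed

lemma trace_mult_expansion:
  assumes fin: "finite I" "finite J" "finite K"
    and disj: "I \<inter> J = {}" "I \<inter> K = {}" "J \<inter> K = {}"
  shows "t (I \<union> J) * t (I \<union> K) =
    (\<Sum>L\<in>Pow I. prod x (I - L) * prod N L * t ((I - L) \<union> J \<union> K)) +
    prod N I * (\<Sum>L\<in>Pow J. prod x (J - L) * t (L \<union> K))"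
proof -
  have union: "prod w (I \<union> J) = prod w I * prod w J" "prod w (I \<union> K) = prod w I * prod w K"
    "prod w (J \<union> K) = prod w J * prod w K" for w :: "'b \<Rightarrow> 'r"
    using fin disj by (simp_all add: prod.union_disjoint)
  have "(\<Sum>L\<in>Pow I. prod x (I - L) * prod N L * t ((I - L) \<union> J \<union> K)) =
      prod y J * prod y K * prod y I ^ 2 + prod z J * prod z K * prod z I ^ 2"
    using sum_Pow_x_N_trace[of I "J \<union> K"] fin disj by (simp add: Un_assoc union Int_Un_distrib)
  moreover have "(\<Sum>L\<in>Pow J. prod x (J - L) * t (L \<union> K)) = prod y K * prod z J + prod z K * prod y J"
    using fin disj by (intro sum_Pow_x_trace)
  moreover have "prod N I = prod y I * prod z I"
    by (simp add: N_eq prod.distrib)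
  ultimately show ?thesis
    by (simp add: t_eq union power2_eq_square algebra_simps)
qed

lemma trace_relation:
  assumes fin: "finite I" "finite J" "finite K"
    and disj: "I \<inter> J = {}" "I \<inter> K = {}" "J \<inter> K = {}"
  shows "t (I \<union> J) * t (I \<union> K) +
    (\<Sum>L | L \<subset> I. prod x (I - L) * prod N L * t ((I - L) \<union> J \<union> K)) +
    prod N I * (\<Sum>L | L \<subset> J. prod x (J - L) * t (L \<union> K)) = 0"
proof -
  let ?P = "prod N I * t (J \<union> K)"
  have "t (I \<union> J) * t (I \<union> K) +
      (\<Sum>L | L \<subset> I. prod x (I - L) * prod N L * t ((I - L) \<union> J \<union> K)) +
      prod N I * (\<Sum>L | L \<subset> J. prod x (J - L) * t (L \<union> K)) =
      2 * (t (I \<union> J) * t (I \<union> K) - ?P)"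
    using trace_mult_expansion[OF fin disj]
    by (simp add: sum_psubset_eq fin right_diff_distrib algebra_simps flip: mult_2)
  also have "\<dots> = 0"
    using two by simp
  finally show ?thesis .
qed

end

lemma pi_zero [simp]: "pi 0 = 0"
  by (simp add: pi_def)

lemma pi_add: "pi (p + q) = pi p + pi q"
  by (simp add: pi_def meval_add)

lemma pi_mult: "pi (p * q) = pi p * pi q"
  by (simp add: pi_def meval_mult)

lemma pi_sum: "pi (\<Sum>i\<in>S. f i) = (\<Sum>i\<in>S. pi (f i))"
  by (simp add: pi_def meval_sum)

lemma pi_prod: "pi (\<Prod>i\<in>S. f i) = (\<Prod>i\<in>S. pi (f i))"
  by (simp add: pi_def meval_prod)

lemma pi_mvar: "pi (mvar v) = pi_var v"
  by (simp add: pi_def meval_mvar)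

lemma pi_xpow: "pi (xpow S) = prod sx S"
  by (simp add: xpow_def pi_prod qx_def pi_mvar)

lemma pi_Npow: "pi (Npow S) = (\<Prod>s\<in>S. sy s ^ 2 + sx s * sy s)"
  by (simp add: Npow_def pi_prod qN_def pi_mvar)

lemma mpoly_two_eq_zero:
  assumes "CHAR('a::comm_ring_1) = 2"
  shows "(2::('v, 'a) mpoly) = 0"
proof -
  have "(2::'a) = 0"
    using assms of_nat_CHAR[where 'a = 'a] by simp
  then show ?thesis
    by (metis single_numeral single_zero)
qed

text \<open>The convention \<open>Tr(0) = 0\<close>, \<open>Tr(\<Delta>_s) = x_s\<close> is compatible with \<open>\<pi>\<close> only in
  characteristic 2. Infinite \<open>C\<close> behave like \<open>C = {}\<close>: \<open>card C = 0\<close> and both products are 1.\<close>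

lemma pi_Tr:
  assumes "CHAR('a::comm_ring_1) = 2"
  shows "pi (Tr C :: 'a qpoly) = tr C"
proof -
  have two: "(2::'a spoly) = 0"
    using assms by (rule mpoly_two_eq_zero)
  consider "card C = 0" | "card C = 1" | "card C \<ge> 2"
    by linarith
  then show ?thesis
  proof cases
    case 1
    then have "C = {} \<or> infinite C"
      by (simp add: card_eq_0_iff)
    then have "(tr C :: 'a spoly) = 2"
      by (auto simp: tr_def one_add_one)
    with 1 two show ?thesis
      by (simp add: Tr_def)
  next
    case 2
    then obtain s where C: "C = {s}"
      by (rule card_1_singletonE)
    have "(tr C :: 'a spoly) = sx s + (sy s + sy s)"
      by (simp add: C tr_def algebra_simps)
    also have "\<dots> = sx s"
      using two by (simp flip: mult_2)
    finally show ?thesis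
      by (simp add: C Tr_def qx_def pi_mvar)
  next
    case 3
    then show ?thesis
      by (simp add: Tr_def pi_mvar)
  qed
qed

theorem mainTheorem3:
  fixes A B :: "nat set" and m :: nat
  assumes char2: "CHAR('a::field) = 2"
    and m: "m \<ge> 1"
    and AB: "A \<subseteq> {1..m}" "B \<subseteq> {1..m}"
    and cA: "card A \<ge> 2" and cB: "card B \<ge> 2"
  shows "let I = A \<inter> B; J = A - B; K = B - A in
     pi ((Tr A * Tr B
        + (\<Sum>L | L \<subset> I. xpow (I - L) * Npow L * Tr ((I - L) \<union> J \<union> K))
        + Npow I * (\<Sum>L | L \<subset> J. xpow (J - L) * Tr (L \<union> K))) :: 'a qpoly) = 0"
proof -
  define I J K where "I = A \<inter> B" and "J = A - B" and "K = B - A"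
  have fin: "finite I" "finite J" "finite K"
    using AB by (auto simp: I_def J_def K_def intro: finite_subset)
  have disj: "I \<inter> J = {}" "I \<inter> K = {}" "J \<inter> K = {}" and AB_split: "A = I \<union> J" "B = I \<union> K"
    by (auto simp: I_def J_def K_def)
  have two: "(2::'a spoly) = 0"
    using char2 by (rule mpoly_two_eq_zero)
  have "(sx s :: 'a spoly) = sy s + (sy s + sx s)" for s
    using two by (simp add: algebra_simps flip: mult_2)
  moreover have "(sy s ^ 2 + sx s * sy s :: 'a spoly) = sy s * (sy s + sx s)" for s
    by (simp add: power2_eq_square algebra_simps)
  ultimately have "tr (I \<union> J) * tr (I \<union> K) +
      (\<Sum>L | L \<subset> I. prod sx (I - L) * (\<Prod>s\<in>L. sy s ^ 2 + sx s * sy s) * tr ((I - L) \<union> J \<union> K)) +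
      (\<Prod>s\<in>I. sy s ^ 2 + sx s * sy s) * (\<Sum>L | L \<subset> J. prod sx (J - L) * tr (L \<union> K)) = (0::'a spoly)"
    by (intro trace_relation[OF two] fin disj) (simp_all add: tr_def)
  then show ?thesis
    unfolding Let_def I_def[symmetric] J_def[symmetric] K_def[symmetric]
    by (simp add: AB_split pi_add pi_mult pi_sum pi_xpow pi_Npow pi_Tr[OF char2])
qed

end
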